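(* Let $f_1,f_2,f_3$ be functions on an open interval $I$ and let $X_{\mathbb{F}}=\begin{pmatrix}0&f_1&0&0\\-f_1&0&f_2&0\\0&-f_2&0&f_3\\0&0&-f_3&0\end{pmatrix}$. Let $\gamma: I\to\mathbb{E}^4$ be a $2$-regular curve which admits a frame $\mathbb{F}$ with coefficient matrix $X_{\mathbb{F}}$. Then $\gamma$ admits a frame $\mathbb{D}$ with coefficient matrix $X_{\mathbb{D}}=\begin{pmatrix}0&d_1&0&0\\-d_1&0&d_2&d_3\\0&-d_2&0&0\\0&-d_3&0&0\end{pmatrix}$, where $d_1=\epsilon f_1$, $d_2=\epsilon f_2\cos\left(\int f_3\,ds\right)$, $d_3=-\kappa f_2\sin\left(\int f_3\,ds\right)$ for some $\epsilon,\kappa\in\{1,-1\}$ (here $\int f_3\,ds$ denotes an antiderivative of $f_3$).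
   Context: A regular curve $\gamma: I\to\mathbb{E}^4$ is considered with arc-length parameter $s$; $\mathbb{T}=\gamma'$ is its unit tangent vector, and $\gamma$ is $2$-regular if $\mathbb{T}'$ is nowhere vanishing. A frame on $\gamma$ is an ordered orthonormal frame $(\mathbb{T},\mathbb{Z}_1,\mathbb{Z}_2,\mathbb{Z}_3)$ of smooth vector fields along $\gamma$ whose first vector is $\mathbb{T}$; it is identified with the smooth map $\mathbb{Z}: I\to O(4)$ whose rows are these vectors. Its coefficient matrix is the $\mathfrak{o}(4)$-valued function $X$ with $\mathbb{Z}'=X\mathbb{Z}$. *)

theory Defs
  imports "HOL-Analysis.Analysis"
begin

definition smooth_on :: "real set \<Rightarrow> (real \<Rightarrow> 'a::real_normed_vector) \<Rightarrow> bool" where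
  "smooth_on I g \<longleftrightarrow> (\<exists>D :: nat \<Rightarrow> real \<Rightarrow> 'a.
      (\<forall>s\<in>I. D 0 s = g s) \<and>
      (\<forall>n. \<forall>s\<in>I. (D n has_vector_derivative D (Suc n) s) (at s)))"

definition open_interval :: "real set \<Rightarrow> bool" where
  "open_interval I \<longleftrightarrow> open I \<and> is_interval I \<and> I \<noteq> {}"

definition unit_tangent :: "(real \<Rightarrow> real^4) \<Rightarrow> real \<Rightarrow> real^4" where
  "unit_tangent \<gamma> s = vector_derivative \<gamma> (at s)"

definition arclength_curve :: "real set \<Rightarrow> (real \<Rightarrow> real^4) \<Rightarrow> bool" where
  "arclength_curve I \<gamma> \<longleftrightarrow> smooth_on I \<gamma> \<and>
     (\<forall>s\<in>I. \<gamma> differentiable (at s) \<and> norm (unit_tangent \<gamma> s) = 1)"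

definition two_regular :: "real set \<Rightarrow> (real \<Rightarrow> real^4) \<Rightarrow> bool" where
  "two_regular I \<gamma> \<longleftrightarrow> arclength_curve I \<gamma> \<and>
     (\<forall>s\<in>I. vector_derivative (unit_tangent \<gamma>) (at s) \<noteq> 0)"

text \<open>A frame on gamma: smooth map Z : I \<rightarrow> O(4) whose rows (T, Z1, Z2, Z3) are orthonormal,
  with first row T.\<close>
definition is_frame :: "real set \<Rightarrow> (real \<Rightarrow> real^4) \<Rightarrow> (real \<Rightarrow> real^4^4) \<Rightarrow> bool" where
  "is_frame I \<gamma> Z \<longleftrightarrow> smooth_on I Z \<and>
     (\<forall>s\<in>I. orthogonal_matrix (Z s) \<and> Z s $ 1 = unit_tangent \<gamma> s)"

definition coeff_matrix :: "real set \<Rightarrow> (real \<Rightarrow> real^4^4) \<Rightarrow> (real \<Rightarrow> real^4^4) \<Rightarrow> bool" where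
  "coeff_matrix I Z X \<longleftrightarrow> (\<forall>s\<in>I. (Z has_vector_derivative (X s ** Z s)) (at s))"

definition XF :: "real \<Rightarrow> real \<Rightarrow> real \<Rightarrow> real^4^4" where
  "XF a b c = vector [vector [0, a, 0, 0], vector [-a, 0, b, 0],
                      vector [0, -b, 0, c], vector [0, 0, -c, 0]]"

definition XD :: "real \<Rightarrow> real \<Rightarrow> real \<Rightarrow> real^4^4" where
  "XD a b c = vector [vector [0, a, 0, 0], vector [-a, 0, b, c],
                      vector [0, -b, 0, 0], vector [0, -c, 0, 0]]"

end

theory Submission
  imports Defs
begin

text \<open>Write \<open>F = (T, F\<^sub>1, F\<^sub>2, F\<^sub>3)\<close> and let \<open>\<theta> = \<integral> f\<^sub>3 ds\<close>. The frame \<open>D\<close> is obtained by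
  reflecting the normal plane \<open>span {F\<^sub>2, F\<^sub>3}\<close> along the angle \<open>\<theta>\<close>:
  \<open>D\<^sub>2 = cos \<theta> F\<^sub>2 - sin \<theta> F\<^sub>3\<close> and \<open>D\<^sub>3 = - sin \<theta> F\<^sub>2 - cos \<theta> F\<^sub>3\<close>, i.e. \<open>D = R F\<close>.
  Because \<open>\<theta>' = f\<^sub>3\<close>, differentiating \<open>R\<close> exactly cancels the twisting term \<open>f\<^sub>3\<close> of \<open>X\<^sub>F\<close>:
  \<open>R' + R X\<^sub>F = X\<^sub>D R\<close>, whence \<open>D' = X\<^sub>D D\<close> with \<open>\<epsilon> = \<kappa> = 1\<close>. What remains is smoothness of
  \<open>D\<close>: \<open>f\<^sub>3\<close> is an entry of \<open>F' F\<^sup>T\<close>, hence smooth, and therefore so are \<open>cos \<theta>\<close> and \<open>sin \<theta>\<close>.\<close>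

fun times_differentiable_on :: "nat \<Rightarrow> real set \<Rightarrow> (real \<Rightarrow> 'a::real_normed_vector) \<Rightarrow> bool"
where
  "times_differentiable_on 0 I g = True"
| "times_differentiable_on (Suc k) I g \<longleftrightarrow>
     (\<exists>g'. (\<forall>s\<in>I. (g has_vector_derivative g' s) (at s)) \<and> times_differentiable_on k I g')"

lemma times_differentiable_on_SucD:
  "times_differentiable_on (Suc k) I g \<Longrightarrow> times_differentiable_on k I g"
proof (induction k arbitrary: g)
  case (Suc k)
  then obtain g' where
    "\<forall>s\<in>I. (g has_vector_derivative g' s) (at s)" "times_differentiable_on (Suc k) I g'"
    by auto
  then show ?case
    using Suc.IH by auto
qed simp

lemma times_differentiable_on_cong:
  assumes "open I" and "\<forall>s\<in>I. g s = h s" and "times_differentiable_on k I g"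
  shows "times_differentiable_on k I h"
proof (cases k)
  case (Suc m)
  then obtain g' where
    "\<forall>s\<in>I. (g has_vector_derivative g' s) (at s)" "times_differentiable_on m I g'"
    using assms(3) by auto
  moreover from this(1) have "\<forall>s\<in>I. (h has_vector_derivative g' s) (at s)"
    using assms(1,2) by (metis has_vector_derivative_transform_within_open)
  ultimately show ?thesis using Suc by auto
qed simp

lemma times_differentiable_on_derivative_sequence:
  assumes "\<forall>n. \<forall>s\<in>I. (D n has_vector_derivative D (Suc n) s) (at s)"
  shows "times_differentiable_on k I (D n)"
  using assms by (induction k arbitrary: n) auto

lemma smooth_on_iff_times_differentiable_on:
  assumes "open I"
  shows "smooth_on I g \<longleftrightarrow> (\<forall>k. times_differentiable_on k I g)"
proof
  assume "smooth_on I g"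
  then obtain D where "\<forall>s\<in>I. D 0 s = g s" "\<forall>n. \<forall>s\<in>I. (D n has_vector_derivative D (Suc n) s) (at s)"
    unfolding smooth_on_def by blast
  then show "\<forall>k. times_differentiable_on k I g"
    using times_differentiable_on_cong[OF assms] times_differentiable_on_derivative_sequence by blast
next
  assume g: "\<forall>k. times_differentiable_on k I g"
  define D where "D n = ((\<lambda>f s. vector_derivative f (at s)) ^^ n) g" for n
  have D_Suc: "D (Suc n) = (\<lambda>s. vector_derivative (D n) (at s))" for n
    by (simp add: D_def)
  have D_Ck: "\<forall>k. times_differentiable_on k I (D n)" for n
  proof (induction n)
    case 0
    then show ?case using g by (simp add: D_def)
  next
    case (Suc n)
    show ?case
    proof
      fix k
      have "times_differentiable_on (Suc k) I (D n)"
        using Suc.IH by blast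
      then obtain g' where
        "\<forall>s\<in>I. (D n has_vector_derivative g' s) (at s)" "times_differentiable_on k I g'"
        by auto
      then show "times_differentiable_on k I (D (Suc n))"
        using times_differentiable_on_cong[OF assms] by (metis D_Suc vector_derivative_at)
    qed
  qed
  have "\<forall>n. \<forall>s\<in>I. (D n has_vector_derivative D (Suc n) s) (at s)"
  proof (intro allI ballI)
    fix n s assume "s \<in> I"
    have "times_differentiable_on (Suc 0) I (D n)"
      using D_Ck by blast
    then obtain g' where "\<forall>s\<in>I. (D n has_vector_derivative g' s) (at s)"
      by auto
    with \<open>s \<in> I\<close> show "(D n has_vector_derivative D (Suc n) s) (at s)"
      by (metis D_Suc vector_derivative_at)
  qed
  then show "smooth_on I g"
    unfolding smooth_on_def by (intro exI[of _ D]) (simp add: D_def)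
qed

lemma times_differentiable_on_const: "times_differentiable_on k I (\<lambda>s. c)"
  by (induction k arbitrary: c) (auto intro!: exI[of _ "\<lambda>s. 0"])

lemma times_differentiable_on_add:
  "times_differentiable_on k I f \<Longrightarrow> times_differentiable_on k I g \<Longrightarrow>
    times_differentiable_on k I (\<lambda>s. f s + g s)"
proof (induction k arbitrary: f g)
  case (Suc k)
  obtain f' g' where
    f': "\<forall>s\<in>I. (f has_vector_derivative f' s) (at s)" "times_differentiable_on k I f'" and
    g': "\<forall>s\<in>I. (g has_vector_derivative g' s) (at s)" "times_differentiable_on k I g'"
    using Suc.prems by auto
  then show ?case
    using Suc.IH[OF f'(2) g'(2)]
    by (auto intro!: exI[of _ "\<lambda>s. f' s + g' s"] has_vector_derivative_add)
qed simp

lemma times_differentiable_on_bounded_linear: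
  assumes "bounded_linear L"
  shows "times_differentiable_on k I f \<Longrightarrow> times_differentiable_on k I (\<lambda>s. L (f s))"
proof (induction k arbitrary: f)
  case (Suc k)
  then obtain f' where
    "\<forall>s\<in>I. (f has_vector_derivative f' s) (at s)" "times_differentiable_on k I f'"
    by auto
  then show ?case
    using Suc.IH bounded_linear.has_vector_derivative[OF assms]
    by (auto intro!: exI[of _ "\<lambda>s. L (f' s)"])
qed simp

lemma times_differentiable_on_bounded_bilinear:
  assumes "bounded_bilinear pr"
  shows "times_differentiable_on k I f \<Longrightarrow> times_differentiable_on k I g \<Longrightarrow>
    times_differentiable_on k I (\<lambda>s. pr (f s) (g s))"
proof (induction k arbitrary: f g)
  case (Suc k)
  obtain f' g' where
    f': "\<forall>s\<in>I. (f has_vector_derivative f' s) (at s)" "times_differentiable_on k I f'" and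
    g': "\<forall>s\<in>I. (g has_vector_derivative g' s) (at s)" "times_differentiable_on k I g'"
    using Suc.prems by auto
  have "\<forall>s\<in>I. ((\<lambda>s. pr (f s) (g s)) has_vector_derivative
                 pr (f s) (g' s) + pr (f' s) (g s)) (at s)"
    using f'(1) g'(1) bounded_bilinear.has_vector_derivative[OF assms] by blast
  moreover have "times_differentiable_on k I (\<lambda>s. pr (f s) (g' s) + pr (f' s) (g s))"
  proof (rule times_differentiable_on_add)
    show "times_differentiable_on k I (\<lambda>s. pr (f s) (g' s))"
      using Suc.IH[OF times_differentiable_on_SucD g'(2)] Suc.prems(1) by simp
    show "times_differentiable_on k I (\<lambda>s. pr (f' s) (g s))"
      using Suc.IH[OF f'(2) times_differentiable_on_SucD] Suc.prems(2) by simp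
  qed
  ultimately show ?case by auto
qed simp

lemma smooth_on_cong:
  assumes "smooth_on I g" and "\<forall>s\<in>I. g s = h s"
  shows "smooth_on I h"
proof -
  obtain D where "\<forall>s\<in>I. D 0 s = g s" "\<forall>n. \<forall>s\<in>I. (D n has_vector_derivative D (Suc n) s) (at s)"
    using assms(1) unfolding smooth_on_def by blast
  with assms(2) show ?thesis
    unfolding smooth_on_def by (intro exI[of _ D]) simp
qed

lemma smooth_on_vector_derivative:
  assumes "open I" and "smooth_on I g" and "\<forall>s\<in>I. (g has_vector_derivative g' s) (at s)"
  shows "smooth_on I g'"
proof -
  obtain D where D: "\<forall>s\<in>I. D 0 s = g s" "\<forall>n. \<forall>s\<in>I. (D n has_vector_derivative D (Suc n) s) (at s)"
    using assms(2) unfolding smooth_on_def by blast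
  have "D (Suc 0) s = g' s" if "s \<in> I" for s
  proof -
    have "(g has_vector_derivative D (Suc 0) s) (at s)"
      using D that assms(1) by (metis has_vector_derivative_transform_within_open)
    with that assms(3) show ?thesis
      using vector_derivative_unique_at by blast
  qed
  with D(2) show ?thesis
    unfolding smooth_on_def by (intro exI[of _ "\<lambda>n. D (Suc n)"]) simp
qed

lemma smooth_on_const: "open I \<Longrightarrow> smooth_on I (\<lambda>s. c)"
  unfolding smooth_on_iff_times_differentiable_on by (blast intro: times_differentiable_on_const)

lemma smooth_on_add:
  assumes "open I" and "smooth_on I f" and "smooth_on I g"
  shows "smooth_on I (\<lambda>s. f s + g s)"
  using assms(2,3) unfolding smooth_on_iff_times_differentiable_on[OF assms(1)]
  by (blast intro: times_differentiable_on_add)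

lemma smooth_on_bounded_linear:
  assumes "open I" and "bounded_linear L" and "smooth_on I f"
  shows "smooth_on I (\<lambda>s. L (f s))"
  using assms(3) unfolding smooth_on_iff_times_differentiable_on[OF assms(1)]
  by (blast intro: times_differentiable_on_bounded_linear[OF assms(2)])

lemma smooth_on_bounded_bilinear:
  assumes "open I" and "bounded_bilinear pr" and "smooth_on I f" and "smooth_on I g"
  shows "smooth_on I (\<lambda>s. pr (f s) (g s))"
  using assms(3,4) unfolding smooth_on_iff_times_differentiable_on[OF assms(1)]
  by (blast intro: times_differentiable_on_bounded_bilinear[OF assms(2)])

lemma smooth_on_cos_sin:
  assumes "open I" and "smooth_on I \<theta>'" and "\<forall>s\<in>I. (\<theta> has_real_derivative \<theta>' s) (at s)"
  shows "smooth_on I (\<lambda>s. cos (\<theta> s)) \<and> smooth_on I (\<lambda>s. sin (\<theta> s))"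
proof -
  have "times_differentiable_on k I (\<lambda>s. cos (\<theta> s)) \<and> times_differentiable_on k I (\<lambda>s. sin (\<theta> s))"
    for k
  proof (induction k)
    case (Suc k)
    have \<theta>': "times_differentiable_on k I \<theta>'"
      using assms(1,2) smooth_on_iff_times_differentiable_on by blast
    have "times_differentiable_on k I (\<lambda>s. - sin (\<theta> s) * \<theta>' s)"
      "times_differentiable_on k I (\<lambda>s. cos (\<theta> s) * \<theta>' s)"
      using Suc times_differentiable_on_bounded_linear[OF bounded_linear_minus[OF bounded_linear_ident]]
      by (auto intro!: times_differentiable_on_bounded_bilinear[OF bounded_bilinear_mult] \<theta>')
    moreover have
      "\<forall>s\<in>I. ((\<lambda>s. cos (\<theta> s)) has_vector_derivative - sin (\<theta> s) * \<theta>' s) (at s)"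
      "\<forall>s\<in>I. ((\<lambda>s. sin (\<theta> s)) has_vector_derivative cos (\<theta> s) * \<theta>' s) (at s)"
      using assms(3)
      by (auto simp flip: has_real_derivative_iff_has_vector_derivative intro: derivative_eq_intros)
    ultimately show ?case by auto
  qed simp
  then show ?thesis
    using assms(1) smooth_on_iff_times_differentiable_on by blast
qed

lemma matrix_add_rdistrib: "((A :: 'a::semiring_1^'n^'m) + B) ** C = A ** C + B ** C"
  by (simp add: matrix_matrix_mult_def vec_eq_iff sum.distrib distrib_right)

lemma bounded_bilinear_matrix_matrix_mult:
  "bounded_bilinear ((**) :: real^'n^'m \<Rightarrow> real^'p^'n \<Rightarrow> real^'p^'m)"
  unfolding bilinear_conv_bounded_bilinear[symmetric] bilinear_def
proof (intro conjI allI)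
  fix A :: "real^'n^'m"
  show "linear (\<lambda>B::real^'p^'n. A ** B)"
    by (rule linearI) (simp_all add: matrix_add_ldistrib matrix_scalar_ac scalar_matrix_assoc)
next
  fix B :: "real^'p^'n"
  show "linear (\<lambda>A::real^'n^'m. A ** B)"
    by (rule linearI) (simp_all add: matrix_add_rdistrib scalar_matrix_assoc)
qed

lemma bounded_linear_transpose: "bounded_linear (transpose :: real^'n^'m \<Rightarrow> real^'m^'n)"
  by (simp add: linear_conv_bounded_linear[symmetric] linearI transpose_def vec_eq_iff)

lemma matrix_matrix_mult_row_axis:
  assumes "A $ i = axis j 1"
  shows "(A ** (B :: 'a::semiring_1^'n^'k)) $ i = B $ j"
  by (simp add: matrix_matrix_mult_def assms vec_eq_iff axis_def if_distrib if_distribR cong: if_cong)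

lemma smooth_on_coeff_matrix:
  assumes "open I" and "smooth_on I Z" and "\<forall>s\<in>I. orthogonal_matrix (Z s)"
    and "coeff_matrix I Z X"
  shows "smooth_on I X"
proof -
  have "smooth_on I (\<lambda>s. X s ** Z s)"
    using assms(4) unfolding coeff_matrix_def by (rule smooth_on_vector_derivative[OF assms(1,2)])
  moreover have "smooth_on I (\<lambda>s. transpose (Z s))"
    by (rule smooth_on_bounded_linear[OF assms(1) bounded_linear_transpose assms(2)])
  ultimately have "smooth_on I (\<lambda>s. (X s ** Z s) ** transpose (Z s))"
    by (rule smooth_on_bounded_bilinear[OF assms(1) bounded_bilinear_matrix_matrix_mult])
  moreover have "\<forall>s\<in>I. (X s ** Z s) ** transpose (Z s) = X s"
    using assms(3) by (simp add: orthogonal_matrix_def flip: matrix_mul_assoc)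
  ultimately show ?thesis
    by (rule smooth_on_cong)
qed

lemma is_frame_matrix_mult_left:
  assumes "open I" and "is_frame I \<gamma> F" and "smooth_on I R"
    and "\<forall>s\<in>I. orthogonal_matrix (R s) \<and> R s $ 1 = axis 1 1"
  shows "is_frame I \<gamma> (\<lambda>s. R s ** F s)"
  unfolding is_frame_def
proof (intro conjI ballI)
  show "smooth_on I (\<lambda>s. R s ** F s)"
    using assms(2) unfolding is_frame_def
    by (intro smooth_on_bounded_bilinear[OF assms(1) bounded_bilinear_matrix_matrix_mult assms(3)]) simp
  fix s assume "s \<in> I"
  with assms(2,4) show "orthogonal_matrix (R s ** F s)" "(R s ** F s) $ 1 = unit_tangent \<gamma> s"
    by (simp_all add: is_frame_def orthogonal_matrix_mul matrix_matrix_mult_row_axis)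
qed

lemma coeff_matrix_matrix_mult_left:
  assumes "coeff_matrix I F X" and "\<forall>s\<in>I. (R has_vector_derivative R' s) (at s)"
    and "\<forall>s\<in>I. R' s + R s ** X s = Y s ** R s"
  shows "coeff_matrix I (\<lambda>s. R s ** F s) Y"
  unfolding coeff_matrix_def
proof
  fix s assume "s \<in> I"
  then have "((\<lambda>s. R s ** F s) has_vector_derivative R s ** (X s ** F s) + R' s ** F s) (at s)"
    using assms(1,2) bounded_bilinear.has_vector_derivative[OF bounded_bilinear_matrix_matrix_mult]
    unfolding coeff_matrix_def by blast
  also have "R s ** (X s ** F s) + R' s ** F s = Y s ** (R s ** F s)"
    using assms(3) \<open>s \<in> I\<close>
    by (simp add: matrix_mul_assoc add.commute flip: matrix_add_rdistrib)
  finally show "((\<lambda>s. R s ** F s) has_vector_derivative Y s ** (R s ** F s)) (at s)" .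
qed

lemma vector_4 [simp]:
  "(vector [x, y, z, w] :: 'a::zero^4) $ 1 = x"
  "(vector [x, y, z, w] :: 'a::zero^4) $ 2 = y"
  "(vector [x, y, z, w] :: 'a::zero^4) $ 3 = z"
  "(vector [x, y, z, w] :: 'a::zero^4) $ 4 = w"
  unfolding vector_def by simp_all

definition normal_reflection :: "real \<Rightarrow> real \<Rightarrow> real^4^4" where
  "normal_reflection c s = vector [vector [1, 0, 0, 0], vector [0, 1, 0, 0],
                                   vector [0, 0, c, -s], vector [0, 0, -s, -c]]"

lemma normal_reflection_affine:
  "normal_reflection c s = normal_reflection 0 0
     + c *\<^sub>R (normal_reflection 1 0 - normal_reflection 0 0)
     + s *\<^sub>R (normal_reflection 0 1 - normal_reflection 0 0)"
  by (simp add: normal_reflection_def vec_eq_iff forall_4)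

lemma orthogonal_matrix_normal_reflection:
  "c\<^sup>2 + s\<^sup>2 = 1 \<Longrightarrow> orthogonal_matrix (normal_reflection c s)"
  by (simp add: orthogonal_matrix normal_reflection_def vec_eq_iff forall_4 sum_4
      matrix_matrix_mult_def transpose_def mat_def power2_eq_square algebra_simps)

lemma normal_reflection_first_row: "normal_reflection c s $ 1 = axis 1 1"
  by (simp add: normal_reflection_def vec_eq_iff forall_4 axis_def)

lemma smooth_on_normal_reflection:
  assumes "open I" and "smooth_on I c" and "smooth_on I s"
  shows "smooth_on I (\<lambda>t. normal_reflection (c t) (s t))"
  using assms
  by (subst normal_reflection_affine)
    (intro smooth_on_add smooth_on_const smooth_on_bounded_bilinear[OF _ bounded_bilinear_scaleR])

lemma has_vector_derivative_normal_reflection: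
  assumes "(c has_real_derivative c') (at t)" and "(s has_real_derivative s') (at t)"
  shows "((\<lambda>t. normal_reflection (c t) (s t)) has_vector_derivative
           normal_reflection c' s' - normal_reflection 0 0) (at t)"
proof -
  have "((\<lambda>t. normal_reflection (c t) (s t)) has_vector_derivative
          c' *\<^sub>R (normal_reflection 1 0 - normal_reflection 0 0)
          + s' *\<^sub>R (normal_reflection 0 1 - normal_reflection 0 0)) (at t)"
    using assms by (subst normal_reflection_affine) (auto intro!: derivative_eq_intros)
  then show ?thesis
    by (subst (2) normal_reflection_affine) simp
qed

lemma normal_reflection_gauge:
  assumes "c\<^sup>2 + s\<^sup>2 = 1"
  shows "(normal_reflection (- (s * t)) (c * t) - normal_reflection 0 0)
           + normal_reflection c s ** XF a b t
         = XD a (b * c) (- (b * s)) ** normal_reflection c s"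
proof -
  have "b * (c * c) + b * (s * s) = b"
    using assms by (metis distrib_left mult_1_right power2_eq_square)
  then show ?thesis
    by (simp add: normal_reflection_def XF_def XD_def vec_eq_iff forall_4 sum_4
        matrix_matrix_mult_def algebra_simps)
qed

lemma smooth_on_third_curvature:
  assumes "open I" and "is_frame I \<gamma> F" and "coeff_matrix I F (\<lambda>s. XF (f1 s) (f2 s) (f3 s))"
  shows "smooth_on I f3"
proof -
  have "bounded_linear (\<lambda>A :: real^4^4. A $ 3 $ 4)"
    by (intro bounded_linear_compose[OF bounded_linear_vec_nth] bounded_linear_vec_nth)
  moreover have "smooth_on I (\<lambda>s. XF (f1 s) (f2 s) (f3 s))"
    using assms(1,2) by (intro smooth_on_coeff_matrix[OF _ _ _ assms(3)]) (simp_all add: is_frame_def)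
  ultimately have "smooth_on I (\<lambda>s. XF (f1 s) (f2 s) (f3 s) $ 3 $ 4)"
    by (rule smooth_on_bounded_linear[OF assms(1)])
  then show ?thesis
    by (rule smooth_on_cong) (simp add: XF_def)
qed

lemma is_frame_normal_reflection:
  assumes "open I" and "is_frame I \<gamma> F" and "coeff_matrix I F (\<lambda>s. XF (f1 s) (f2 s) (f3 s))"
    and "\<forall>s\<in>I. (\<theta> has_real_derivative f3 s) (at s)"
  shows "is_frame I \<gamma> (\<lambda>s. normal_reflection (cos (\<theta> s)) (sin (\<theta> s)) ** F s)"
proof -
  have "smooth_on I (\<lambda>s. cos (\<theta> s))" "smooth_on I (\<lambda>s. sin (\<theta> s))"
    using smooth_on_cos_sin[OF assms(1) smooth_on_third_curvature[OF assms(1-3)] assms(4)] by blast+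
  with assms(1,2) show ?thesis
    by (intro is_frame_matrix_mult_left smooth_on_normal_reflection)
      (simp_all add: orthogonal_matrix_normal_reflection normal_reflection_first_row)
qed

lemma coeff_matrix_normal_reflection:
  assumes "coeff_matrix I F (\<lambda>s. XF (f1 s) (f2 s) (f3 s))"
    and "\<forall>s\<in>I. (\<theta> has_real_derivative f3 s) (at s)"
  shows "coeff_matrix I (\<lambda>s. normal_reflection (cos (\<theta> s)) (sin (\<theta> s)) ** F s)
           (\<lambda>s. XD (f1 s) (f2 s * cos (\<theta> s)) (- (f2 s * sin (\<theta> s))))"
proof (rule coeff_matrix_matrix_mult_left[OF assms(1)])
  show "\<forall>s\<in>I. ((\<lambda>s. normal_reflection (cos (\<theta> s)) (sin (\<theta> s))) has_vector_derivative
      normal_reflection (- sin (\<theta> s) * f3 s) (cos (\<theta> s) * f3 s) - normal_reflection 0 0) (at s)"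
  proof
    fix s assume "s \<in> I"
    with assms(2) have "(\<theta> has_real_derivative f3 s) (at s)"
      by blast
    then show "((\<lambda>s. normal_reflection (cos (\<theta> s)) (sin (\<theta> s))) has_vector_derivative
        normal_reflection (- sin (\<theta> s) * f3 s) (cos (\<theta> s) * f3 s) - normal_reflection 0 0) (at s)"
      by (intro has_vector_derivative_normal_reflection DERIV_fun_cos DERIV_fun_sin)
  qed
qed (simp add: normal_reflection_gauge[OF sin_cos_squared_add2])

theorem proposition3:
  fixes I :: "real set" and f1 f2 f3 :: "real \<Rightarrow> real"
    and \<gamma> :: "real \<Rightarrow> real^4" and F :: "real \<Rightarrow> real^4^4" and \<theta> :: "real \<Rightarrow> real"
  assumes "open_interval I"
    and "two_regular I \<gamma>"
    and "is_frame I \<gamma> F"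
    and "coeff_matrix I F (\<lambda>s. XF (f1 s) (f2 s) (f3 s))"
    and "\<forall>s\<in>I. (\<theta> has_real_derivative f3 s) (at s)"
  shows "\<exists>\<epsilon> \<kappa> :: real. \<epsilon> \<in> {1, -1} \<and> \<kappa> \<in> {1, -1} \<and>
           (\<exists>D. is_frame I \<gamma> D \<and>
                coeff_matrix I D (\<lambda>s. XD (\<epsilon> * f1 s) (\<epsilon> * f2 s * cos (\<theta> s))
                                         (- \<kappa> * f2 s * sin (\<theta> s))))"
proof -
  have "open I"
    using assms(1) by (simp add: open_interval_def)
  then show ?thesis
    using is_frame_normal_reflection[OF _ assms(3,4,5)] coeff_matrix_normal_reflection[OF assms(4,5)]
    by (intro exI[of _ "1::real"] conjI
        exI[of _ "\<lambda>s. normal_reflection (cos (\<theta> s)) (sin (\<theta> s)) ** F s"])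
      simp_all
qed

end
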